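(* Let $f^{cl}_{\pi_\star}$ be $\eta$-locally $\delta$-ISS for some $\eta>0$, with gain $\gamma$ satisfying $\gamma(x)\le O(x^{1/r})$ as $x\to0^+$ for some $r\ge1$. Fix a test policy $\pi$ and initial condition $\xi\in\mathcal X$, and let $p\in\mathbb N$ satisfy $p+1-r>0$. Assume $\pi$ and $\pi_\star$ are $p$-times continuously differentiable and there is $L_{\partial^p\pi}\ge0$ with \[\Big\|\bar\pi(x)-\sum_{j=0}^p\tfrac1{j!}\partial_x^j\bar\pi(x_0)(x-x_0)^{\otimes j}\Big\|\le\tfrac{L_{\partial^p\pi}}{(p+1)!}\|x-x_0\|^{p+1}\] for all $x,x_0$ and $\bar\pi\in\{\pi,\pi_\star\}$. Choose $\mu,\alpha>0$ with $\alpha\le1/2$ such that \[2\tfrac{L_{\partial^p\pi}}{(p+1)!}x^{p+1}+(x/\mu)^r\le\gamma^{-1}(x)\quad\text{for all }0\le x\le\alpha.\] If \[\max_{0\le t\le T-1}\max_{0\le j\le p}\mu\Big(\tfrac{2}{j!}\|\partial_x^j\Delta_t^{\pi_\star}(\xi;\pi)\|\Big)^{1/r}\le\alpha,\] \[\max_{0\le t\le T-1}\max_{0\le j\le p}\Big[\tfrac{2L_{\partial^p\pi}\mu^{p+1}}{(p+1)!}\Big(\tfrac{2}{j!}\|\partial_x^j\Delta_t^{\pi_\star}(\xi;\pi)\|\Big)^{\frac{p+1}{r}}+\tfrac{2}{j!}\|\partial_x^j\Delta_t^{\pi_\star}(\xi;\pi)\|\Big]\le\eta,\] then for all $1\le t\le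 T$, \[\|x_t^{\pi_\star}(\xi)-x_t^\pi(\xi)\|\le\max_{0\le k\le t-1}\max_{0\le j\le p}\mu\Big(\tfrac{2}{j!}\|\partial_x^j\Delta_k^{\pi_\star}(\xi;\pi)\|\Big)^{1/r}.\]
   Context: Dynamics $x_{t+1}=f(x_t,u_t)$, $x_0=\xi$, $x_t\in\mathbb R^d,u_t\in\mathbb R^m$. For a policy $\pi$, perturbed closed loop $x_{t+1}=f^{cl}_\pi(x_t,\Delta_t):=f(x_t,\pi(x_t)+\Delta_t)$, states $x_t^\pi(\xi,\{\Delta_s\})$, $x_t^\pi(\xi):=x_t^\pi(\xi,\{0\})$. Initial conditions lie in a compact set $\mathcal X$. Norms: Euclidean on vectors, operator norm on matrices/tensors; $\otimes$ is the tensor power. Class $\mathcal K$/$\mathcal{KL}$ functions as standard. $f^{cl}_\pi$ is $\eta$-locally $\delta$-ISS if there are class $\mathcal{KL}$ $\beta$ and class $\mathcal K$ $\gamma$ with $\|x_t^\pi(\xi_1;\{\Delta_s\}_{s=0}^{t-1})-x_t^\pi(\xi_2;\{0\})\|\le\beta(\|\xi_1-\xi_2\|,t)+\gamma(\max_{0\le k\le t-1}\|\Delta_k\|)$ for all $\xi_1,\xi_2\in\mathcal X$, $t\in\mathbb N$, and perturbations with $\sup_t\|\Delta_t\|\le\eta$. $\gamma^{-1}$ is the inverse of $\gamma$ on its range (with $\gamma^{-1}(x)=+\infty$ for $x\ge\sup\gamma$). $\pi_\star$ is the expert policy, and $\partial_x^j\Delta_t^{\pi_\star}(\xi;\pi):=\partial_x^j\pi(x_t^{\pi_\star}(\xi))-\partial_x^j\pi_\star(x_t^{\pi_\star}(\xi))$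 (the $j$-th derivative of the policies with respect to their argument, evaluated on the expert trajectory). *)

theory Defs
  imports "HOL-Analysis.Analysis" "HOL-Library.Landau_Symbols"
begin

fun traj :: "('x \<Rightarrow> 'u \<Rightarrow> 'x) \<Rightarrow> ('x \<Rightarrow> 'u::plus) \<Rightarrow> 'x \<Rightarrow> (nat \<Rightarrow> 'u) \<Rightarrow> nat \<Rightarrow> 'x" where
  "traj f \<pi> \<xi> \<Delta> 0 = \<xi>"
| "traj f \<pi> \<xi> \<Delta> (Suc t) = f (traj f \<pi> \<xi> \<Delta> t) (\<pi> (traj f \<pi> \<xi> \<Delta> t) + \<Delta> t)"

definition ctraj :: "('x \<Rightarrow> 'u \<Rightarrow> 'x) \<Rightarrow> ('x \<Rightarrow> 'u::monoid_add) \<Rightarrow> 'x \<Rightarrow> nat \<Rightarrow> 'x" where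
  "ctraj f \<pi> \<xi> t = traj f \<pi> \<xi> (\<lambda>_. 0) t"

definition class_K :: "(real \<Rightarrow> real) \<Rightarrow> bool" where
  "class_K \<gamma> \<longleftrightarrow> \<gamma> 0 = 0 \<and> continuous_on {0..} \<gamma> \<and> strict_mono_on {0..} \<gamma>"

definition class_KL :: "(real \<Rightarrow> nat \<Rightarrow> real) \<Rightarrow> bool" where
  "class_KL \<beta> \<longleftrightarrow> (\<forall>t. class_K (\<lambda>s. \<beta> s t)) \<and>
     (\<forall>s\<ge>0. antimono (\<lambda>t. \<beta> s t) \<and> (\<lambda>t. \<beta> s t) \<longlonglongrightarrow> 0)"

definition maxpert :: "(nat \<Rightarrow> 'u::real_normed_vector) \<Rightarrow> nat \<Rightarrow> real" where
  "maxpert \<Delta> t = Max (insert 0 {norm (\<Delta> k) | k. k < t})"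

definition locally_delta_ISS ::
  "('x::real_normed_vector \<Rightarrow> 'u::real_normed_vector \<Rightarrow> 'x) \<Rightarrow> ('x \<Rightarrow> 'u) \<Rightarrow> 'x set \<Rightarrow> real
    \<Rightarrow> (real \<Rightarrow> nat \<Rightarrow> real) \<Rightarrow> (real \<Rightarrow> real) \<Rightarrow> bool" where
  "locally_delta_ISS f \<pi> X \<eta> \<beta> \<gamma> \<longleftrightarrow> class_KL \<beta> \<and> class_K \<gamma> \<and>
     (\<forall>\<xi>1\<in>X. \<forall>\<xi>2\<in>X. \<forall>\<Delta> t. (\<forall>s. norm (\<Delta> s) \<le> \<eta>) \<longrightarrow>
        norm (traj f \<pi> \<xi>1 \<Delta> t - ctraj f \<pi> \<xi>2 t) \<le> \<beta> (norm (\<xi>1 - \<xi>2)) t + \<gamma> (maxpert \<Delta> t))"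

definition gamma_inv :: "(real \<Rightarrow> real) \<Rightarrow> real \<Rightarrow> ereal" where
  "gamma_inv \<gamma> x = (if x \<in> \<gamma> ` {0..} then ereal (THE y. y \<ge> 0 \<and> \<gamma> y = x) else \<infinity>)"

text \<open>Operator norm of a j-linear map T (given as a function on lists of j vectors).\<close>
definition tnorm :: "('a::real_normed_vector list \<Rightarrow> 'b::real_normed_vector) \<Rightarrow> nat \<Rightarrow> real" where
  "tnorm T j = (SUP hs\<in>{hs. length hs = j \<and> (\<forall>h\<in>set hs. norm h \<le> 1)}. norm (T hs))"

text \<open>D j x [h1,...,hj] is the j-th Frechet derivative of g at x applied to h1,...,hj;
  the family D witnesses that g is p-times continuously differentiable.\<close>
definition higher_derivs :: "nat \<Rightarrow> ('a::real_normed_vector \<Rightarrow> 'b::real_normed_vector)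
    \<Rightarrow> (nat \<Rightarrow> 'a \<Rightarrow> 'a list \<Rightarrow> 'b) \<Rightarrow> bool" where
  "higher_derivs p g D \<longleftrightarrow>
     (\<forall>x. D 0 x [] = g x) \<and>
     (\<forall>j<p. \<forall>x hs. length hs = j \<longrightarrow>
        ((\<lambda>y. D j y hs) has_derivative (\<lambda>h. D (Suc j) x (h # hs))) (at x)) \<and>
     (\<forall>x. ((\<lambda>y. tnorm (\<lambda>hs. D p y hs - D p x hs) p) \<longlongrightarrow> 0) (at x))"

definition taylor_poly :: "nat \<Rightarrow> (nat \<Rightarrow> 'a::real_normed_vector \<Rightarrow> 'a list \<Rightarrow> 'b::real_normed_vector)
    \<Rightarrow> 'a \<Rightarrow> 'a \<Rightarrow> 'b" where
  "taylor_poly p D x0 x = (\<Sum>j\<le>p. (1 / fact j) *\<^sub>R D j x0 (replicate j (x - x0)))"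

end

theory Submission
  imports Defs
begin

text \<open>Running the test policy \<open>\<pi>\<close> is the same as running the expert \<open>\<pi>\<^sub>\<star>\<close> under the input
  perturbation \<open>\<Delta>\<^sub>t = \<pi>(x\<^sub>t) - \<pi>\<^sub>\<star>(x\<^sub>t)\<close>, so by incremental ISS the tracking error at time \<open>t\<close> is at most
  \<open>\<gamma>(max\<^sub>k\<^sub><\<^sub>t \<parallel>\<Delta>\<^sub>k\<parallel>)\<close>. Expanding both policies to order \<open>p\<close> around the expert state bounds \<open>\<parallel>\<Delta>\<^sub>k\<parallel>\<close> by
  the derivative gaps plus \<open>2 L/(p+1)! e\<^sup>p\<^sup>+\<^sup>1\<close>, where \<open>e\<close> is the error so far. If \<open>e\<close> is at most the claimed
  bound \<open>z\<close>, the derivative gaps are at most \<open>(z/\<mu>)\<^sup>r\<close> and the condition on \<open>\<gamma>\<^sup>-\<^sup>1\<close> turns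
  \<open>\<gamma>(2 L/(p+1)! z\<^sup>p\<^sup>+\<^sup>1 + (z/\<mu>)\<^sup>r)\<close> back into \<open>z\<close>; strong induction on \<open>t\<close> closes the bootstrap.\<close>

section \<open>Multilinear maps\<close>

fun multilinear :: "nat \<Rightarrow> ('a::real_normed_vector list \<Rightarrow> 'b::real_normed_vector) \<Rightarrow> bool" where
  "multilinear 0 T = True"
| "multilinear (Suc j) T \<longleftrightarrow>
     (\<forall>hs. length hs = j \<longrightarrow> linear (\<lambda>h. T (h # hs))) \<and> (\<forall>h. multilinear j (\<lambda>hs. T (h # hs)))"

lemma multilinear_has_derivative:
  assumes "\<And>z. multilinear j (F z)"
    and "\<And>hs. length hs = j \<Longrightarrow> ((\<lambda>z. F z hs) has_derivative (\<lambda>h. G h hs)) (at y)"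
  shows "multilinear j (G h)"
  using assms
proof (induction j arbitrary: F G h)
  case 0
  then show ?case by simp
next
  case (Suc j)
  have "linear (\<lambda>b. G h (b # hs))" if len: "length hs = j" for hs
  proof -
    have lin: "linear (\<lambda>b. F z (b # hs))" for z
      using Suc.prems(1)[of z] len by simp
    have deriv: "((\<lambda>z. F z (b # hs)) has_derivative (\<lambda>h. G h (b # hs))) (at y)" for b
      using Suc.prems(2)[of "b # hs"] len by simp
    show ?thesis
    proof (rule linearI)
      fix b1 b2
      have "((\<lambda>z. F z ((b1 + b2) # hs)) has_derivative (\<lambda>h. G h (b1 # hs) + G h (b2 # hs))) (at y)"
        using has_derivative_add[OF deriv[of b1] deriv[of b2]] by (simp add: linear_add[OF lin])
      from has_derivative_unique[OF deriv this]
      show "G h ((b1 + b2) # hs) = G h (b1 # hs) + G h (b2 # hs)" by meson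
    next
      fix c b
      have "((\<lambda>z. F z ((c *\<^sub>R b) # hs)) has_derivative (\<lambda>h. c *\<^sub>R G h (b # hs))) (at y)"
        using has_derivative_scaleR_right[OF deriv[of b]] by (simp add: linear_scale[OF lin])
      from has_derivative_unique[OF deriv this]
      show "G h ((c *\<^sub>R b) # hs) = c *\<^sub>R G h (b # hs)" by meson
    qed
  qed
  moreover have "multilinear j (\<lambda>hs. G h (b # hs))" for b
    by (rule Suc.IH[of "\<lambda>z hs. F z (b # hs)"]) (use Suc.prems in auto)
  ultimately show ?case by simp
qed

lemma higher_derivs_multilinear:
  assumes "higher_derivs p g D" "j \<le> p"
  shows "multilinear j (D j x)"
  using assms(2)
proof (induction j arbitrary: x)
  case 0
  then show ?case by simp
next
  case (Suc j)
  have deriv: "\<And>x hs. length hs = j \<Longrightarrow>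
      ((\<lambda>y. D j y hs) has_derivative (\<lambda>h. D (Suc j) x (h # hs))) (at x)"
    using assms(1) Suc.prems unfolding higher_derivs_def by auto
  have "linear (\<lambda>h. D (Suc j) x (h # hs))" if "length hs = j" for hs
    using has_derivative_linear[OF deriv[OF that]] .
  moreover have "multilinear j (\<lambda>hs. D (Suc j) x (h # hs))" for h
    by (rule multilinear_has_derivative[of j "D j" _ x]) (use Suc deriv in auto)
  ultimately show ?case by simp
qed

lemma multilinear_diff:
  assumes "multilinear j T" "multilinear j S"
  shows "multilinear j (\<lambda>hs. T hs - S hs)"
  using assms by (induction j arbitrary: T S) (auto intro: linear_compose_sub)

lemma multilinear_scaleR_args:
  assumes "multilinear j T" "length hs = j"
  shows "T (map ((*\<^sub>R) c) hs) = c ^ j *\<^sub>R T hs"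
  using assms
proof (induction j arbitrary: T hs)
  case 0
  then show ?case by simp
next
  case (Suc j)
  then obtain h hs' where hs: "hs = h # hs'" and len: "length hs' = j"
    by (cases hs) auto
  have "linear (\<lambda>h. T (h # map ((*\<^sub>R) c) hs'))"
    using Suc.prems len by simp
  then have "T (map ((*\<^sub>R) c) hs) = c *\<^sub>R T (h # map ((*\<^sub>R) c) hs')"
    using hs linear_scale by fastforce
  also have "T (h # map ((*\<^sub>R) c) hs') = c ^ j *\<^sub>R T (h # hs')"
    using Suc.IH[of "\<lambda>hs. T (h # hs)" hs'] Suc.prems len by simp
  finally show ?case
    using hs by simp
qed

lemma multilinear_bounded:
  fixes T :: "'a::euclidean_space list \<Rightarrow> 'b::real_normed_vector"
  assumes "multilinear j T"
  shows "\<exists>K\<ge>0. \<forall>hs. length hs = j \<longrightarrow> norm (T hs) \<le> K * prod_list (map norm hs)"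
  using assms
proof (induction j arbitrary: T)
  case 0
  then show ?case by (intro exI[of _ "norm (T [])"]) auto
next
  case (Suc j)
  then have "\<forall>b\<in>Basis. \<exists>K\<ge>0. \<forall>hs. length hs = j \<longrightarrow> norm (T (b # hs)) \<le> K * prod_list (map norm hs)"
    by auto
  then obtain K where K: "\<And>b. b \<in> Basis \<Longrightarrow>
      K b \<ge> 0 \<and> (\<forall>hs. length hs = j \<longrightarrow> norm (T (b # hs)) \<le> K b * prod_list (map norm hs))"
    by (metis (no_types, lifting) bchoice)
  show ?case
  proof (intro exI[of _ "\<Sum>b\<in>Basis. K b"] conjI allI impI)
    show "0 \<le> (\<Sum>b\<in>Basis. K b)"
      using K by (simp add: sum_nonneg)
    fix hs' :: "'a list"
    assume "length hs' = Suc j"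
    then obtain h hs where hs': "hs' = h # hs" and len: "length hs = j"
      by (cases hs') auto
    have lin: "linear (\<lambda>h. T (h # hs))"
      using Suc.prems len by simp
    have "T (h # hs) = T ((\<Sum>b\<in>Basis. (h \<bullet> b) *\<^sub>R b) # hs)"
      by (simp add: euclidean_representation)
    also have "\<dots> = (\<Sum>b\<in>Basis. (h \<bullet> b) *\<^sub>R T (b # hs))"
      by (simp only: linear_sum[OF lin] linear_scale[OF lin])
    finally have "norm (T (h # hs)) \<le> (\<Sum>b\<in>Basis. \<bar>h \<bullet> b\<bar> * norm (T (b # hs)))"
      by (simp add: order_trans[OF norm_sum])
    also have "\<dots> \<le> (\<Sum>b\<in>Basis. norm h * (K b * prod_list (map norm hs)))"
      using K len Basis_le_norm by (intro sum_mono mult_mono) auto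
    also have "\<dots> = (\<Sum>b\<in>Basis. K b) * prod_list (map norm hs')"
      unfolding hs' by (simp add: sum_distrib_left sum_distrib_right mult.left_commute)
    finally show "norm (T hs') \<le> (\<Sum>b\<in>Basis. K b) * prod_list (map norm hs')"
      using hs' by simp
  qed
qed

lemma tnorm_upper:
  fixes T :: "'a::euclidean_space list \<Rightarrow> 'b::real_normed_vector"
  assumes "multilinear j T" "length hs = j" "\<forall>h\<in>set hs. norm h \<le> 1"
  shows "norm (T hs) \<le> tnorm T j"
proof -
  obtain K where K: "K \<ge> 0" "\<And>hs. length hs = j \<Longrightarrow> norm (T hs) \<le> K * prod_list (map norm hs)"
    using multilinear_bounded[OF assms(1)] by blast
  have bound: "norm (T hs) \<le> K" if "length hs = j" "\<forall>h\<in>set hs. norm h \<le> 1" for hs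
  proof -
    have "prod_list (map norm hs) \<le> 1"
      using that(2) by (induction hs) (auto intro!: mult_le_one prod_list_nonneg)
    then show ?thesis
      using K that(1) order_trans mult_left_le by blast
  qed
  show ?thesis
    unfolding tnorm_def
  proof (rule cSUP_upper)
    show "bdd_above ((\<lambda>hs. norm (T hs)) ` {hs. length hs = j \<and> (\<forall>h\<in>set hs. norm h \<le> 1)})"
      using bound by (intro bdd_aboveI2[where M = K]) auto
  qed (use assms(2,3) in auto)
qed

lemma tnorm_nonneg:
  fixes T :: "'a::euclidean_space list \<Rightarrow> 'b::real_normed_vector"
  assumes "multilinear j T"
  shows "0 \<le> tnorm T j"
  using tnorm_upper[OF assms, of "replicate j 0"] by (simp add: order_trans[OF norm_ge_zero])

lemma norm_replicate_le_tnorm: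
  fixes T :: "'a::euclidean_space list \<Rightarrow> 'b::real_normed_vector"
  assumes "multilinear j T"
  shows "norm (T (replicate j e)) \<le> tnorm T j * norm e ^ j"
proof -
  define u where "u = e /\<^sub>R norm e"
  have "norm u \<le> 1"
    by (cases "e = 0") (simp_all add: u_def)
  have "e = norm e *\<^sub>R u"
    by (cases "e = 0") (simp_all add: u_def)
  then have rep: "replicate j e = map ((*\<^sub>R) (norm e)) (replicate j u)"
    by (metis map_replicate)
  have "T (replicate j e) = norm e ^ j *\<^sub>R T (replicate j u)"
    unfolding rep by (rule multilinear_scaleR_args[OF assms]) simp
  moreover have "norm (T (replicate j u)) \<le> tnorm T j"
    using tnorm_upper[OF assms] \<open>norm u \<le> 1\<close> by simp
  ultimately show ?thesis
    by (simp add: mult.commute[of "norm e ^ j"] mult_right_mono)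
qed

lemma higher_derivs_tnorm_diff_nonneg:
  fixes D E :: "nat \<Rightarrow> 'a::euclidean_space \<Rightarrow> 'a list \<Rightarrow> 'b::real_normed_vector"
  assumes "higher_derivs p g D" "higher_derivs p h E" "j \<le> p"
  shows "0 \<le> tnorm (\<lambda>hs. D j y hs - E j y hs) j"
  using assms by (simp add: tnorm_nonneg multilinear_diff higher_derivs_multilinear)

section \<open>The policy gap from Taylor expansions\<close>

lemma norm_taylor_poly_diff_le:
  fixes D E :: "nat \<Rightarrow> 'a::euclidean_space \<Rightarrow> 'a list \<Rightarrow> 'b::real_normed_vector"
  assumes "higher_derivs p g D" "higher_derivs p h E"
  shows "norm (taylor_poly p D x0 x - taylor_poly p E x0 x)
    \<le> (\<Sum>j\<le>p. tnorm (\<lambda>hs. D j x0 hs - E j x0 hs) j / fact j * norm (x - x0) ^ j)"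
proof -
  have "taylor_poly p D x0 x - taylor_poly p E x0 x
      = (\<Sum>j\<le>p. (1 / fact j) *\<^sub>R (D j x0 (replicate j (x - x0)) - E j x0 (replicate j (x - x0))))"
    by (simp add: taylor_poly_def sum_subtractf scaleR_diff_right)
  also have "norm \<dots> \<le> (\<Sum>j\<le>p. tnorm (\<lambda>hs. D j x0 hs - E j x0 hs) j / fact j * norm (x - x0) ^ j)"
  proof (rule order_trans[OF norm_sum sum_mono])
    fix j assume "j \<in> {..p}"
    then have "multilinear j (\<lambda>hs. D j x0 hs - E j x0 hs)"
      using assms by (simp add: multilinear_diff higher_derivs_multilinear)
    from norm_replicate_le_tnorm[OF this, of "x - x0"]
    show "norm ((1 / fact j) *\<^sub>R (D j x0 (replicate j (x - x0)) - E j x0 (replicate j (x - x0))))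
        \<le> tnorm (\<lambda>hs. D j x0 hs - E j x0 hs) j / fact j * norm (x - x0) ^ j"
      by (simp add: divide_right_mono)
  qed
  finally show ?thesis .
qed

lemma sum_power_le_two:
  fixes z :: real
  assumes "0 \<le> z" "z \<le> 1 / 2"
  shows "(\<Sum>j\<le>p. z ^ j) \<le> 2"
proof -
  have "(\<Sum>j\<le>p. z ^ j) \<le> (\<Sum>j\<le>p. (1 / 2) ^ j)"
    using assms by (intro sum_mono power_mono) auto
  also have "\<dots> = 2 - (1 / 2) ^ p"
    by (induction p) auto
  finally show ?thesis
    using zero_le_power[of "1 / 2 :: real" p] by linarith
qed

lemma norm_diff_le_of_taylor:
  fixes g h :: "'a::euclidean_space \<Rightarrow> 'b::real_normed_vector"
  assumes derivs: "higher_derivs p g D" "higher_derivs p h E"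
    and taylor_g: "\<And>x x0. norm (g x - taylor_poly p D x0 x) \<le> L / fact (p + 1) * norm (x - x0) ^ (p + 1)"
    and taylor_h: "\<And>x x0. norm (h x - taylor_poly p E x0 x) \<le> L / fact (p + 1) * norm (x - x0) ^ (p + 1)"
    and L: "0 \<le> L" and z: "norm (x - y) \<le> z" "z \<le> 1 / 2"
    and N: "\<And>j. j \<le> p \<Longrightarrow> 2 / fact j * tnorm (\<lambda>hs. D j y hs - E j y hs) j \<le> N"
  shows "norm (g x - h x) \<le> 2 * L / fact (p + 1) * z ^ (p + 1) + N"
proof -
  let ?Tg = "taylor_poly p D y x" and ?Th = "taylor_poly p E y x"
  have "norm (g x - h x) \<le> norm ((g x - ?Tg) - (h x - ?Th)) + norm (?Tg - ?Th)"
    using norm_triangle_ineq[of "(g x - ?Tg) - (h x - ?Th)" "?Tg - ?Th"] by simp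
  then have "norm (g x - h x) \<le> norm (g x - ?Tg) + norm (h x - ?Th) + norm (?Tg - ?Th)"
    using norm_triangle_ineq4[of "g x - ?Tg" "h x - ?Th"] by linarith
  moreover have "norm (g x - ?Tg) + norm (h x - ?Th) \<le> 2 * L / fact (p + 1) * z ^ (p + 1)"
  proof -
    have "L / fact (p + 1) * norm (x - y) ^ (p + 1) \<le> L / fact (p + 1) * z ^ (p + 1)"
      using z L by (intro mult_left_mono power_mono) auto
    then show ?thesis
      using taylor_g[of x y] taylor_h[of x y] by simp
  qed
  moreover have "norm (?Tg - ?Th) \<le> N"
  proof -
    have "0 \<le> N"
      using N[of 0] tnorm_nonneg[of 0 "\<lambda>hs. D 0 y hs - E 0 y hs"] by simp
    have "(\<Sum>j\<le>p. tnorm (\<lambda>hs. D j y hs - E j y hs) j / fact j * norm (x - y) ^ j)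
        \<le> (\<Sum>j\<le>p. N / 2 * z ^ j)"
    proof (rule sum_mono)
      fix j assume "j \<in> {..p}"
      then have "tnorm (\<lambda>hs. D j y hs - E j y hs) j / fact j \<le> N / 2"
        using N[of j] by (simp add: ac_simps)
      moreover have "0 \<le> tnorm (\<lambda>hs. D j y hs - E j y hs) j"
        using \<open>j \<in> {..p}\<close> by (simp add: higher_derivs_tnorm_diff_nonneg[OF derivs])
      ultimately show "tnorm (\<lambda>hs. D j y hs - E j y hs) j / fact j * norm (x - y) ^ j
          \<le> N / 2 * z ^ j"
        using z \<open>0 \<le> N\<close> by (intro mult_mono power_mono) auto
    qed
    also have "\<dots> = N / 2 * (\<Sum>j\<le>p. z ^ j)"
      by (simp add: sum_distrib_left)
    also have "\<dots> \<le> N / 2 * 2"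
      using sum_power_le_two[of z p] \<open>0 \<le> N\<close> z order_trans[OF norm_ge_zero z(1)]
      by (intro mult_left_mono) auto
    finally show ?thesis
      using norm_taylor_poly_diff_le[OF derivs, of y x] by simp
  qed
  ultimately show ?thesis
    by linarith
qed

lemma scaled_root_powr:
  fixes \<mu> r v :: real
  assumes "0 < \<mu>" "0 < r" "0 \<le> v"
  shows "(\<mu> * v powr (1 / r) / \<mu>) powr r = v"
  using assms by (simp add: powr_powr)

lemma taylor_radius_at_scaled_root:
  fixes \<mu> r v L :: real
  assumes "0 < \<mu>" "0 < r" "0 \<le> v"
  shows "2 * L / fact (p + 1) * (\<mu> * v powr (1 / r)) ^ (p + 1) + (\<mu> * v powr (1 / r) / \<mu>) powr r
    = 2 * L * \<mu> ^ (p + 1) / fact (p + 1) * v powr ((real p + 1) / r) + v"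
proof -
  have "(v powr (1 / r)) ^ (p + 1) = (v powr (1 / r)) powr real (p + 1)"
    by (rule powr_realpow'[symmetric]) simp_all
  also have "\<dots> = v powr ((real p + 1) / r)"
    by (simp add: powr_powr add.commute)
  finally show ?thesis
    using scaled_root_powr[OF assms] by (simp add: power_mult_distrib)
qed

lemma le_powr_if_scaled_root_le:
  fixes \<mu> r v z :: real
  assumes "0 < \<mu>" "0 < r" "0 \<le> v" "\<mu> * v powr (1 / r) \<le> z"
  shows "v \<le> (z / \<mu>) powr r"
proof -
  have "(\<mu> * v powr (1 / r) / \<mu>) powr r \<le> (z / \<mu>) powr r"
    using assms by (intro powr_mono2 divide_right_mono) auto
  then show ?thesis
    using scaled_root_powr[OF assms(1-3)] by simp
qed

corollary norm_diff_le_of_taylor_root: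
  fixes g h :: "'a::euclidean_space \<Rightarrow> 'b::real_normed_vector"
  assumes derivs: "higher_derivs p g D" "higher_derivs p h E"
    and taylor_g: "\<And>x x0. norm (g x - taylor_poly p D x0 x) \<le> L / fact (p + 1) * norm (x - x0) ^ (p + 1)"
    and taylor_h: "\<And>x x0. norm (h x - taylor_poly p E x0 x) \<le> L / fact (p + 1) * norm (x - x0) ^ (p + 1)"
    and "0 \<le> L" "0 < \<mu>" "0 < r" "norm (x - y) \<le> z" "z \<le> 1 / 2"
    and root: "\<And>j. j \<le> p \<Longrightarrow> \<mu> * (2 / fact j * tnorm (\<lambda>hs. D j y hs - E j y hs) j) powr (1 / r) \<le> z"
  shows "norm (g x - h x) \<le> 2 * L / fact (p + 1) * z ^ (p + 1) + (z / \<mu>) powr r"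
proof (rule norm_diff_le_of_taylor[OF derivs taylor_g taylor_h \<open>0 \<le> L\<close> \<open>norm (x - y) \<le> z\<close> \<open>z \<le> 1 / 2\<close>])
  fix j assume "j \<le> p"
  then show "2 / fact j * tnorm (\<lambda>hs. D j y hs - E j y hs) j \<le> (z / \<mu>) powr r"
    using assms higher_derivs_tnorm_diff_nonneg[OF derivs \<open>j \<le> p\<close>]
    by (intro le_powr_if_scaled_root_le) auto
qed

section \<open>Incremental input-to-state stability\<close>

lemma class_K_le_if_le_gamma_inv:
  assumes K: "class_K \<gamma>" and "0 \<le> w" "0 \<le> z" and le: "ereal w \<le> gamma_inv \<gamma> z"
  shows "\<gamma> w \<le> z"
proof (cases "z \<in> \<gamma> ` {0..}")
  case True
  then obtain y where y: "0 \<le> y" "\<gamma> y = z"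
    by auto
  have mono: "strict_mono_on {0..} \<gamma>"
    using K by (simp add: class_K_def)
  have "(THE y. y \<ge> 0 \<and> \<gamma> y = z) = y"
    using y strict_mono_on_eqD[OF mono] by (intro the_equality) auto
  then have "w \<le> y"
    using le True by (simp add: gamma_inv_def)
  then show ?thesis
    using strict_mono_on_leD[OF mono] y \<open>0 \<le> w\<close> by fastforce
next
  case False
  \<comment> \<open>then \<open>z\<close> lies above the range of \<open>\<gamma>\<close>, since \<open>\<gamma>\<close> is continuous with \<open>\<gamma> 0 = 0 \<le> z\<close>\<close>
  show ?thesis
  proof (rule ccontr)
    assume "\<not> \<gamma> w \<le> z"
    moreover have "\<gamma> 0 = 0" "continuous_on {0..w} \<gamma>"
      using K by (auto simp: class_K_def intro: continuous_on_subset)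
    ultimately obtain y where "0 \<le> y" "\<gamma> y = z"
      using IVT'[of \<gamma> 0 z w] \<open>0 \<le> z\<close> \<open>0 \<le> w\<close> by auto
    with False show False
      by auto
  qed
qed

lemma locally_delta_ISS_class_K: "locally_delta_ISS f \<pi> X \<eta> \<beta> \<gamma> \<Longrightarrow> class_K \<gamma>"
  unfolding locally_delta_ISS_def by (elim conjE)

lemma locally_delta_ISS_le_gain:
  assumes ISS: "locally_delta_ISS f \<pi> X \<eta> \<beta> \<gamma>" and "\<xi> \<in> X"
    and \<Delta>: "\<And>s. norm (\<Delta> s) \<le> W" and "W \<le> \<eta>"
  shows "norm (traj f \<pi> \<xi> \<Delta> t - ctraj f \<pi> \<xi> t) \<le> \<gamma> W"
proof -
  have KL: "class_KL \<beta>" and K: "class_K \<gamma>"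
    and all: "\<forall>\<xi>1\<in>X. \<forall>\<xi>2\<in>X. \<forall>\<Delta> t. (\<forall>s. norm (\<Delta> s) \<le> \<eta>) \<longrightarrow>
        norm (traj f \<pi> \<xi>1 \<Delta> t - ctraj f \<pi> \<xi>2 t) \<le> \<beta> (norm (\<xi>1 - \<xi>2)) t + \<gamma> (maxpert \<Delta> t)"
    using ISS unfolding locally_delta_ISS_def by auto
  have "\<forall>s. norm (\<Delta> s) \<le> \<eta>"
    using \<Delta> \<open>W \<le> \<eta>\<close> order_trans by blast
  then have bound: "norm (traj f \<pi> \<xi> \<Delta> t - ctraj f \<pi> \<xi> t) \<le> \<beta> 0 t + \<gamma> (maxpert \<Delta> t)"
    using all \<open>\<xi> \<in> X\<close> by fastforce
  have "\<beta> 0 t = 0"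
    using KL by (simp add: class_KL_def class_K_def)
  moreover have "maxpert \<Delta> t \<le> W" "0 \<le> maxpert \<Delta> t"
    unfolding maxpert_def using \<Delta> order_trans[OF norm_ge_zero \<Delta>] by (auto intro!: Max.boundedI Max_ge)
  moreover have "strict_mono_on {0..} \<gamma>"
    using K by (simp add: class_K_def)
  ultimately show ?thesis
    using bound strict_mono_on_leD[of "{0..}" \<gamma> "maxpert \<Delta> t" W] by fastforce
qed

lemma traj_policy_gap:
  fixes f :: "'x \<Rightarrow> 'u::ab_group_add \<Rightarrow> 'x"
  assumes "n \<le> t"
  shows "traj f \<pi>s \<xi> (\<lambda>s. if s < t then \<pi> (ctraj f \<pi> \<xi> s) - \<pi>s (ctraj f \<pi> \<xi> s) else 0) n
    = ctraj f \<pi> \<xi> n"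
  using assms by (induction n) (simp_all add: ctraj_def)

lemma locally_delta_ISS_policy_bootstrap:
  fixes f :: "'x::real_normed_vector \<Rightarrow> 'u::real_normed_vector \<Rightarrow> 'x"
  assumes ISS: "locally_delta_ISS f \<pi>s X \<eta> \<beta> \<gamma>" and "\<xi> \<in> X"
    and \<rho>_mono: "\<And>s t. 1 \<le> s \<Longrightarrow> s \<le> t \<Longrightarrow> \<rho> s \<le> \<rho> t"
    and \<rho>_nonneg: "\<And>t. 1 \<le> t \<Longrightarrow> t \<le> T \<Longrightarrow> 0 \<le> \<rho> t"
    and gap: "\<And>t k. 1 \<le> t \<Longrightarrow> t \<le> T \<Longrightarrow> k < t \<Longrightarrow>
        norm (ctraj f \<pi> \<xi> k - ctraj f \<pi>s \<xi> k) \<le> \<rho> t \<Longrightarrow>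
        norm (\<pi> (ctraj f \<pi> \<xi> k) - \<pi>s (ctraj f \<pi> \<xi> k)) \<le> W t"
    and W: "\<And>t. 1 \<le> t \<Longrightarrow> t \<le> T \<Longrightarrow> W t \<le> \<eta> \<and> \<gamma> (W t) \<le> \<rho> t"
  shows "1 \<le> t \<Longrightarrow> t \<le> T \<Longrightarrow> norm (ctraj f \<pi> \<xi> t - ctraj f \<pi>s \<xi> t) \<le> \<rho> t"
proof (induction t rule: less_induct)
  case (less t)
  have err: "norm (ctraj f \<pi> \<xi> k - ctraj f \<pi>s \<xi> k) \<le> \<rho> t" if "k < t" for k
  proof (cases "k = 0")
    case True
    then show ?thesis
      using \<rho>_nonneg less.prems by (simp add: ctraj_def)
  next
    case False
    then show ?thesis
      using less.IH[of k] that less.prems \<rho>_mono[of k t] by simp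
  qed
  \<comment> \<open>Cutting the policy gap off after time \<open>t\<close> keeps every perturbation within the ISS radius.\<close>
  define \<Delta> where "\<Delta> = (\<lambda>s. if s < t then \<pi> (ctraj f \<pi> \<xi> s) - \<pi>s (ctraj f \<pi> \<xi> s) else 0)"
  have "0 \<le> W t"
    using gap[OF less.prems _ err, of 0] less.prems order_trans[OF norm_ge_zero] by auto
  then have "norm (\<Delta> s) \<le> W t" for s
    using gap[OF less.prems _ err] by (simp add: \<Delta>_def)
  then have "norm (traj f \<pi>s \<xi> \<Delta> t - ctraj f \<pi>s \<xi> t) \<le> \<gamma> (W t)"
    using locally_delta_ISS_le_gain[OF ISS \<open>\<xi> \<in> X\<close>] W less.prems by blast
  moreover have "traj f \<pi>s \<xi> \<Delta> t = ctraj f \<pi> \<xi> t"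
    unfolding \<Delta>_def by (rule traj_policy_gap) simp
  ultimately show ?case
    using W less.prems by fastforce
qed

section \<open>The tracking bound\<close>

lemma finite_grid:
  fixes a :: "nat \<Rightarrow> nat \<Rightarrow> 'a"
  shows "finite {a k j | k j. k < t \<and> j \<le> p}"
proof -
  have grid: "{a k j | k j. k < t \<and> j \<le> p} = (\<lambda>(k, j). a k j) ` ({..<t} \<times> {..p})"
    by auto
  show ?thesis
    unfolding grid by simp
qed

lemma Max_grid_ge:
  fixes a :: "nat \<Rightarrow> nat \<Rightarrow> 'a::linorder"
  assumes "k < t" "j \<le> p"
  shows "a k j \<le> Max {a k j | k j. k < t \<and> j \<le> p}"
  using assms by (intro Max_ge[OF finite_grid]) auto

lemma Max_grid_attained:
  fixes a :: "nat \<Rightarrow> nat \<Rightarrow> 'a::linorder"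
  assumes "0 < t"
  shows "\<exists>k<t. \<exists>j\<le>p. Max {a k j | k j. k < t \<and> j \<le> p} = a k j"
proof -
  have "Max {a k j | k j. k < t \<and> j \<le> p} \<in> {a k j | k j. k < t \<and> j \<le> p}"
    using assms by (intro Max_in[OF finite_grid]) auto
  then show ?thesis
    by blast
qed

lemma Max_grid_mono:
  fixes a :: "nat \<Rightarrow> nat \<Rightarrow> 'a::linorder"
  assumes "0 < s" "s \<le> t"
  shows "Max {a k j | k j. k < s \<and> j \<le> p} \<le> Max {a k j | k j. k < t \<and> j \<le> p}"
proof (rule Max_mono[OF _ _ finite_grid])
  show "{a k j | k j. k < s \<and> j \<le> p} \<subseteq> {a k j | k j. k < t \<and> j \<le> p}"
    using assms(2) by (blast intro: order_less_le_trans)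
qed (use assms(1) in auto)

lemma locally_delta_ISS_taylor_tracking:
  fixes f :: "'x::euclidean_space \<Rightarrow> 'u::euclidean_space \<Rightarrow> 'x"
  assumes ISS: "locally_delta_ISS f \<pi>s X \<eta> \<beta> \<gamma>" and "\<xi> \<in> X"
    and Dpi: "higher_derivs p \<pi> D" and Dpis: "higher_derivs p \<pi>s Ds"
    and taylor_pi: "\<And>x x0. norm (\<pi> x - taylor_poly p D x0 x) \<le> L / fact (p + 1) * norm (x - x0) ^ (p + 1)"
    and taylor_pis: "\<And>x x0. norm (\<pi>s x - taylor_poly p Ds x0 x) \<le> L / fact (p + 1) * norm (x - x0) ^ (p + 1)"
    and L: "0 \<le> L" and mu: "0 < \<mu>" and r: "0 < r" and alpha: "\<alpha> \<le> 1 / 2"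
    and gamma_inv_cond: "\<And>x. 0 \<le> x \<Longrightarrow> x \<le> \<alpha> \<Longrightarrow>
        ereal (2 * L / fact (p + 1) * x ^ (p + 1) + (x / \<mu>) powr r) \<le> gamma_inv \<gamma> x"
    and \<rho>_mono: "\<And>s t. 1 \<le> s \<Longrightarrow> s \<le> t \<Longrightarrow> \<rho> s \<le> \<rho> t"
    and \<rho>_nonneg: "\<And>t. 1 \<le> t \<Longrightarrow> t \<le> T \<Longrightarrow> 0 \<le> \<rho> t"
    and \<rho>_root: "\<And>t k j. 1 \<le> t \<Longrightarrow> t \<le> T \<Longrightarrow> k < t \<Longrightarrow> j \<le> p \<Longrightarrow>
        \<mu> * (2 / fact j * tnorm (\<lambda>hs. D j (ctraj f \<pi>s \<xi> k) hs - Ds j (ctraj f \<pi>s \<xi> k) hs) j) powr (1 / r)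
          \<le> \<rho> t"
    and \<rho>_alpha: "\<And>t. 1 \<le> t \<Longrightarrow> t \<le> T \<Longrightarrow> \<rho> t \<le> \<alpha>"
    and \<rho>_eta: "\<And>t. 1 \<le> t \<Longrightarrow> t \<le> T \<Longrightarrow> 2 * L / fact (p + 1) * \<rho> t ^ (p + 1) + (\<rho> t / \<mu>) powr r \<le> \<eta>"
    and "1 \<le> t" "t \<le> T"
  shows "norm (ctraj f \<pi> \<xi> t - ctraj f \<pi>s \<xi> t) \<le> \<rho> t"
proof -
  define W where "W t = 2 * L / fact (p + 1) * \<rho> t ^ (p + 1) + (\<rho> t / \<mu>) powr r" for t
  show ?thesis
  proof (rule locally_delta_ISS_policy_bootstrap[OF ISS \<open>\<xi> \<in> X\<close> \<rho>_mono \<rho>_nonneg _ _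
        \<open>1 \<le> t\<close> \<open>t \<le> T\<close>, where W = W])
    show "norm (\<pi> (ctraj f \<pi> \<xi> k) - \<pi>s (ctraj f \<pi> \<xi> k)) \<le> W t"
      if "1 \<le> t" "t \<le> T" "k < t" "norm (ctraj f \<pi> \<xi> k - ctraj f \<pi>s \<xi> k) \<le> \<rho> t" for t k
      unfolding W_def using \<rho>_alpha[OF that(1,2)] alpha \<rho>_root[OF that(1-3)]
      by (intro norm_diff_le_of_taylor_root[OF Dpi Dpis taylor_pi taylor_pis L mu r that(4)]) auto
    show "W t \<le> \<eta> \<and> \<gamma> (W t) \<le> \<rho> t" if "1 \<le> t" "t \<le> T" for t
    proof
      show "W t \<le> \<eta>"
        unfolding W_def by (rule \<rho>_eta[OF that])
      have "0 \<le> W t"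
        unfolding W_def using \<rho>_nonneg[OF that] L by (intro add_nonneg_nonneg mult_nonneg_nonneg) auto
      then show "\<gamma> (W t) \<le> \<rho> t"
        unfolding W_def using \<rho>_nonneg[OF that] \<rho>_alpha[OF that] gamma_inv_cond
        by (intro class_K_le_if_le_gamma_inv[OF locally_delta_ISS_class_K[OF ISS]]) auto
    qed
  qed
qed

theorem theorem2:
  fixes f :: "'x::euclidean_space \<Rightarrow> 'u::euclidean_space \<Rightarrow> 'x"
    and \<pi> \<pi>s :: "'x \<Rightarrow> 'u"
    and D Ds :: "nat \<Rightarrow> 'x \<Rightarrow> 'x list \<Rightarrow> 'u"
    and X :: "'x set" and \<xi> :: 'x
    and \<eta> r L \<mu> \<alpha> :: real and p T :: nat
    and \<beta> :: "real \<Rightarrow> nat \<Rightarrow> real" and \<gamma> :: "real \<Rightarrow> real"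
  defines "dn \<equiv> (\<lambda>t j. tnorm (\<lambda>hs. D j (ctraj f \<pi>s \<xi> t) hs - Ds j (ctraj f \<pi>s \<xi> t) hs) j)"
  assumes X: "compact X" and xi: "\<xi> \<in> X"
    and eta: "\<eta> > 0"
    and ISS: "locally_delta_ISS f \<pi>s X \<eta> \<beta> \<gamma>"
    and gamma_O: "\<gamma> \<in> O[at_right 0](\<lambda>x. x powr (1 / r))"
    and r: "r \<ge> 1"
    and p: "real p + 1 - r > 0"
    and Dpi: "higher_derivs p \<pi> D" and Dpis: "higher_derivs p \<pi>s Ds"
    and L: "L \<ge> 0"
    and taylor_pi: "\<And>x x0. norm (\<pi> x - taylor_poly p D x0 x) \<le> L / fact (p + 1) * norm (x - x0) ^ (p + 1)"
    and taylor_pis: "\<And>x x0. norm (\<pi>s x - taylor_poly p Ds x0 x) \<le> L / fact (p + 1) * norm (x - x0) ^ (p + 1)"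
    and mu: "\<mu> > 0" and alpha: "\<alpha> > 0" "\<alpha> \<le> 1 / 2"
    and gamma_inv_cond: "\<And>x. 0 \<le> x \<Longrightarrow> x \<le> \<alpha> \<Longrightarrow>
        ereal (2 * L / fact (p + 1) * x ^ (p + 1) + (x / \<mu>) powr r) \<le> gamma_inv \<gamma> x"
    and H1: "\<And>t j. t < T \<Longrightarrow> j \<le> p \<Longrightarrow> \<mu> * (2 / fact j * dn t j) powr (1 / r) \<le> \<alpha>"
    and H2: "\<And>t j. t < T \<Longrightarrow> j \<le> p \<Longrightarrow>
        2 * L * \<mu> ^ (p + 1) / fact (p + 1) * (2 / fact j * dn t j) powr ((real p + 1) / r)
          + 2 / fact j * dn t j \<le> \<eta>"
  shows "\<forall>t. 1 \<le> t \<and> t \<le> T \<longrightarrow>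
     norm (ctraj f \<pi>s \<xi> t - ctraj f \<pi> \<xi> t)
       \<le> Max {\<mu> * (2 / fact j * dn k j) powr (1 / r) | k j. k < t \<and> j \<le> p}"
proof (intro allI impI, elim conjE)
  \<comment> \<open>The growth condition on \<open>\<gamma>\<close> and \<open>p + 1 > r\<close> only ensure that \<open>\<mu>\<close> and \<open>\<alpha>\<close> as assumed
    exist.\<close>
  define Z where "Z t = Max {\<mu> * (2 / fact j * dn k j) powr (1 / r) | k j. k < t \<and> j \<le> p}" for t
  have "0 < r"
    using r by simp
  have Z_attained: "\<exists>k<t. \<exists>j\<le>p. Z t = \<mu> * (2 / fact j * dn k j) powr (1 / r)" if "1 \<le> t" for t
    unfolding Z_def by (rule Max_grid_attained) (use that in simp)
  have Z_bounds: "0 \<le> Z t \<and> Z t \<le> \<alpha> \<and> 2 * L / fact (p + 1) * Z t ^ (p + 1) + (Z t / \<mu>) powr r \<le> \<eta>"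
    if t: "1 \<le> t" "t \<le> T" for t
  proof -
    obtain k j where "k < t" "j \<le> p" and Z: "Z t = \<mu> * (2 / fact j * dn k j) powr (1 / r)"
      using Z_attained[OF t(1)] by blast
    have v: "0 \<le> 2 / fact j * dn k j"
      unfolding dn_def using higher_derivs_tnorm_diff_nonneg[OF Dpi Dpis \<open>j \<le> p\<close>] by simp
    show ?thesis
      unfolding Z taylor_radius_at_scaled_root[OF mu \<open>0 < r\<close> v]
      using H1[of k j] H2[of k j] \<open>k < t\<close> \<open>j \<le> p\<close> t(2) mu by simp
  qed
  fix t assume "1 \<le> t" "t \<le> T"
  have "norm (ctraj f \<pi> \<xi> t - ctraj f \<pi>s \<xi> t) \<le> Z t"
  proof (rule locally_delta_ISS_taylor_tracking[OF ISS xi Dpi Dpis taylor_pi taylor_pis L mu \<open>0 < r\<close>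
        alpha(2) gamma_inv_cond _ _ _ _ _ \<open>1 \<le> t\<close> \<open>t \<le> T\<close>])
    show "Z s \<le> Z t" if "1 \<le> s" "s \<le> t" for s t
      unfolding Z_def using that by (intro Max_grid_mono) simp_all
    show "\<mu> * (2 / fact j * tnorm (\<lambda>hs. D j (ctraj f \<pi>s \<xi> k) hs - Ds j (ctraj f \<pi>s \<xi> k) hs) j) powr (1 / r)
        \<le> Z t" if "k < t" "j \<le> p" for t k j
      unfolding Z_def dn_def using that by (rule Max_grid_ge)
  qed (use Z_bounds in simp_all)
  then show "norm (ctraj f \<pi>s \<xi> t - ctraj f \<pi> \<xi> t)
      \<le> Max {\<mu> * (2 / fact j * dn k j) powr (1 / r) | k j. k < t \<and> j \<le> p}"
    by (simp add: Z_def norm_minus_commute)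
qed

end
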